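(* Let $q\equiv1\pmod4$ be a prime power, let $i_2$ be an even integer with $0<i_2<(q+1)/2$, and let $r$ be a positive integer with $\gcd(r,q-1)=\gcd(r-i_2,(q+1)/2)=\gcd(r-2i_2,(q+1)/2)=1$. Let $b\in\mathbb F_{q^2}^*$ satisfy $(2/b)^{(q+1)/2}=1$. Then $$X^r\bigl(1-X^{(q^2-1)/2}+bX^{i_2(q-1)}\bigr)$$ is a permutation polynomial of $\mathbb F_{q^2}$. *)

theory Defs
  imports "HOL-Computational_Algebra.Polynomial" "HOL-Computational_Algebra.Primes"
begin

definition prime_power :: "nat \<Rightarrow> bool" where
  "prime_power q \<longleftrightarrow> (\<exists>p k. prime p \<and> k \<ge> 1 \<and> q = p ^ k)"

definition permutation_polynomial :: "'a::{finite,comm_ring_1} poly \<Rightarrow> bool" where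
  "permutation_polynomial P \<longleftrightarrow> bij (poly P)"

end

theory Submission
  imports Defs
begin

text \<open>
  Write the polynomial as \<open>x^r h(x^(q-1))\<close> with \<open>h(u) = 1 - u^m + b u^i2\<close> and \<open>m = (q+1)/2\<close>.
  Since \<open>gcd(r, q-1) = 1\<close>, it permutes the field of order \<open>q^2\<close> as soon as \<open>h\<close> has no zero on
  the group \<open>U\<close> of \<open>(q+1)\<close>-st roots of unity and \<open>\<phi>(u) = u^r h(u)^(q-1)\<close> is injective on \<open>U\<close>.
  For \<open>u \<in> U\<close> we have \<open>u^m = \<plusminus>1\<close>, so \<open>h(u)\<close> is \<open>b u^i2\<close> or \<open>2 + b u^i2\<close>. The Frobenius
  \<open>y \<mapsto> y^q\<close> inverts the elements of \<open>U\<close>, and \<open>c = 2/b\<close> lies in \<open>U\<close>; this gives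
  \<open>\<phi>(u) = c^2 u^(r-2i2)\<close>, resp. \<open>\<phi>(u) = c u^(r-i2)\<close>. Hence \<open>\<phi>(u)^m = u^m\<close>, so \<open>\<phi>\<close> preserves
  the sign \<open>u^m\<close>, and the two gcd conditions make it injective on each of the two classes.
\<close>

lemma power_card_minus_1_eq_1:
  fixes x :: "'a::{field,finite}"
  assumes "x \<noteq> 0"
  shows "x ^ (card (UNIV :: 'a set) - 1) = 1"
proof -
  define S where "S = (UNIV :: 'a set) - {0}"
  have "x ^ card S * \<Prod>S = (\<Prod>y\<in>S. x * y)"
    by (simp only: prod.distrib prod_constant)
  also have "\<dots> = \<Prod>S"
    by (rule prod.reindex_bij_witness[of _ "\<lambda>y. y / x" "\<lambda>y. x * y"])
       (use assms in \<open>auto simp: S_def\<close>)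
  finally have "x ^ card S * \<Prod>S = \<Prod>S" .
  moreover have "\<Prod>S \<noteq> 0"
    unfolding S_def by (subst prod_zero_iff) auto
  moreover have "card S = card (UNIV :: 'a set) - 1"
    unfolding S_def by (rule card_Diff_singleton) simp
  ultimately show ?thesis
    by simp
qed

lemma of_nat_card_eq_0: "of_nat (card (UNIV :: 'a::{ring_1,finite} set)) = (0::'a)"
proof -
  have "(\<Sum>x\<in>UNIV. x + 1) = (\<Sum>x\<in>(UNIV::'a set). x)"
    by (rule sum.reindex_bij_witness[of _ "\<lambda>y. y - 1" "\<lambda>y. y + 1"]) auto
  then show ?thesis
    by (simp add: sum.distrib)
qed

lemma prime_CHAR_finite_field: "prime CHAR('a::{field,finite})"
  by (rule prime_CHAR_semidom) (rule finite_imp_CHAR_pos, simp)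

lemma CHAR_eq_of_card_eq_prime_power:
  assumes "prime p" and "card (UNIV :: 'a::{field,finite} set) = p ^ n"
  shows "CHAR('a) = p"
proof -
  note prime_CHAR_finite_field[where 'a = 'a]
  moreover have "CHAR('a) dvd p ^ n"
    using of_nat_card_eq_0[where 'a = 'a] unfolding assms(2) of_nat_eq_0_iff_char_dvd .
  ultimately have "CHAR('a) dvd p"
    by (rule prime_dvd_power)
  then show ?thesis
    by (rule primes_dvd_imp_eq[OF prime_CHAR_finite_field assms(1)])
qed

lemma frobenius_add_finite_field:
  fixes x y :: "'a::{field,finite}"
  assumes "prime p" and "card (UNIV :: 'a set) = p ^ n"
  shows "(x + y) ^ (p ^ k) = x ^ (p ^ k) + y ^ (p ^ k)"
  using CHAR_eq_of_card_eq_prime_power[OF assms] assms(1) by (intro freshmans_dream') simp_all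

lemma two_neq_0_of_odd_card:
  assumes "odd (card (UNIV :: 'a::{field,finite} set))"
  shows "(2::'a) \<noteq> 0"
proof
  assume "(2::'a) = 0"
  then have "of_nat 2 = (0::'a)"
    by simp
  then have "CHAR('a) dvd 2"
    unfolding of_nat_eq_0_iff_char_dvd .
  then have "CHAR('a) = 2"
    by (rule primes_dvd_imp_eq[OF prime_CHAR_finite_field two_is_prime_nat])
  moreover have "CHAR('a) dvd card (UNIV :: 'a set)"
    using of_nat_card_eq_0[where 'a = 'a] unfolding of_nat_eq_0_iff_char_dvd .
  ultimately show False
    using assms by simp
qed

lemma eq_1_of_power_int_eq_1_coprime:
  fixes z :: "'a::field"
  assumes "z \<noteq> 0" and "z powi a = 1" and "z powi b = 1" and "gcd a b = 1"
  shows "z = 1"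
proof -
  obtain s t where "s * a + t * b = 1"
    using bezout_int[of a b] assms(4) by auto
  then have "z = (z powi a) powi s * (z powi b) powi t"
    using assms(1) by (metis power_int_1_right power_int_add power_int_mult mult.commute)
  then show ?thesis
    using assms(2,3) by simp
qed

lemma eq_of_power_div_power_eq_coprime:
  fixes y z :: "'a::field"
  assumes "y \<noteq> 0" and "z \<noteq> 0" and "(y / z) ^ n = 1"
    and "y ^ a / y ^ k = z ^ a / z ^ k" and "gcd (int a - int k) (int n) = 1"
  shows "y = z"
proof -
  have "(y / z) powi (int a - int k) = 1"
    using assms(1,2,4) by (simp add: power_int_diff power_divide field_simps)
  then have "y / z = 1"
    using eq_1_of_power_int_eq_1_coprime assms(1,2,3,5) by (metis divide_eq_0_iff power_int_of_nat)
  then show ?thesis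
    using assms(2) by simp
qed

lemma eq_of_power_eq_coprime:
  fixes x y :: "'a::field"
  assumes "x \<noteq> 0" and "y \<noteq> 0" and "x ^ a = y ^ a" and "x ^ n = y ^ n" and "coprime a n"
  shows "x = y"
proof -
  have "x / y = 1"
  proof (rule eq_1_of_power_int_eq_1_coprime)
    show "(x / y) powi int a = 1"
      using assms(2,3) by (simp add: power_divide)
    show "(x / y) powi int n = 1"
      using assms(2,4) by (simp add: power_divide)
    show "gcd (int a) (int n) = 1"
      using assms(5) by (simp add: coprime_iff_gcd_eq_1 gcd_int_int_eq)
  qed (use assms(1,2) in simp)
  then show ?thesis
    using assms(2) by simp
qed

lemma power_swap: "(a ^ m) ^ n = (a ^ n) ^ (m::nat)" for a :: "'a::monoid_mult"
  by (simp flip: power_mult add: mult.commute)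

text \<open>The sufficiency half of the Park--Lee--Zieve criterion for \<open>x^r h(x^d)\<close>.\<close>

lemma bij_power_mult_comp_power:
  fixes h :: "'a::{field,finite} \<Rightarrow> 'a" and d l r :: nat
  assumes card: "card (UNIV :: 'a set) - 1 = d * l" and "0 < r" and "coprime r d"
    and h_nonzero: "\<And>u. u ^ l = 1 \<Longrightarrow> h u \<noteq> 0"
    and inj: "inj_on (\<lambda>u. u ^ r * h u ^ d) {u. u ^ l = 1}"
  shows "bij (\<lambda>x. x ^ r * h (x ^ d))"
proof -
  define f where "f x = x ^ r * h (x ^ d)" for x :: 'a
  have root: "x ^ d \<in> {u. u ^ l = 1}" if "x \<noteq> 0" for x :: 'a
  proof -
    have "(x ^ d) ^ l = x ^ (card (UNIV :: 'a set) - 1)"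
      by (simp only: card power_mult)
    then show ?thesis
      using power_card_minus_1_eq_1[OF that] by simp
  qed
  have f_pow: "f x ^ d = (x ^ d) ^ r * h (x ^ d) ^ d" for x
    unfolding f_def power_mult_distrib by (simp only: power_swap[of x r d])
  have f_nonzero: "f x \<noteq> 0" if "x \<noteq> 0" for x
    using h_nonzero root[OF that] that by (simp add: f_def)
  have "f 0 = 0"
    using \<open>0 < r\<close> by (simp add: f_def)
  have "inj f"
  proof (rule injI)
    fix x y
    assume eq: "f x = f y"
    show "x = y"
    proof (cases "x = 0 \<or> y = 0")
      case True
      then show ?thesis
        using eq \<open>f 0 = 0\<close> f_nonzero by metis
    next
      case False
      then have "x \<noteq> 0" "y \<noteq> 0" by auto
      have "(x ^ d) ^ r * h (x ^ d) ^ d = (y ^ d) ^ r * h (y ^ d) ^ d"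
        using eq by (simp only: f_pow[symmetric])
      then have "x ^ d = y ^ d"
        by (rule inj_onD[OF inj _ root[OF \<open>x \<noteq> 0\<close>] root[OF \<open>y \<noteq> 0\<close>]])
      have "h (y ^ d) \<noteq> 0"
        using h_nonzero root[OF \<open>y \<noteq> 0\<close>] by simp
      moreover have "x ^ r * h (y ^ d) = y ^ r * h (y ^ d)"
        using eq \<open>x ^ d = y ^ d\<close> by (simp add: f_def)
      ultimately have "x ^ r = y ^ r"
        by simp
      then show "x = y"
        using eq_of_power_eq_coprime \<open>x ^ d = y ^ d\<close> \<open>x \<noteq> 0\<close> \<open>y \<noteq> 0\<close> \<open>coprime r d\<close>
        by blast
    qed
  qed
  then have "bij f"
    using finite_UNIV_inj_surj[of f] by (simp add: bij_def)
  then show ?thesis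
    by (simp add: f_def[abs_def])
qed

locale unit_circle_trinomial =
  fixes q m i2 r :: nat and b :: "'a::field"
  assumes frobenius_add: "\<And>x y :: 'a. (x + y) ^ q = x ^ q + y ^ q"
    and q_plus_1_eq: "q + 1 = 2 * m" and odd_m: "odd m"
    and even_i2: "even i2" and odd_r: "odd r"
    and two_neq_0: "(2::'a) \<noteq> 0" and b_neq_0: "b \<noteq> 0"
    and c_power_m: "(2 / b) ^ m = 1"
    and coprime_r_i2: "gcd (int r - int i2) (int m) = 1"
    and coprime_r_2i2: "gcd (int r - 2 * int i2) (int m) = 1"
begin

definition c :: 'a where "c = 2 / b"

definition h :: "'a \<Rightarrow> 'a" where "h u = 1 - u ^ m + b * u ^ i2"

definition circle_map :: "'a \<Rightarrow> 'a" where "circle_map u = u ^ r * h u ^ (q - 1)"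

lemma q_pos: "0 < q"
  using q_plus_1_eq odd_m by (cases m) auto

lemma power_q_minus_1_eq:
  fixes y k :: 'a
  assumes "y \<noteq> 0" and "y ^ q = k * y"
  shows "y ^ (q - 1) = k"
proof -
  have "y ^ (q - 1) * y = k * y"
    using assms(2) q_pos by (metis power_minus_mult)
  then show ?thesis
    using assms(1) by simp
qed

lemma unit_circle_neq_0: "u ^ (q + 1) = 1 \<Longrightarrow> u \<noteq> (0::'a)"
  by auto

lemma unit_circle_power_q:
  fixes u :: 'a
  assumes "u ^ (q + 1) = 1"
  shows "u ^ q = inverse u"
  using inverse_unique[of u "u ^ q"] assms by simp

lemma unit_circle_power_m:
  fixes u :: 'a
  assumes "u ^ (q + 1) = 1"
  shows "u ^ m = 1 \<or> u ^ m = -1"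
proof -
  have "(u ^ m)\<^sup>2 = 1"
    using assms by (simp only: q_plus_1_eq power_even_eq)
  then show ?thesis
    by (simp add: power2_eq_1_iff)
qed

lemma unit_circle_power_i2_m:
  fixes u :: 'a
  assumes "u ^ (q + 1) = 1"
  shows "(u ^ i2) ^ m = 1"
proof -
  have "(u ^ i2) ^ m = (u ^ m) ^ i2"
    by (simp add: power_swap)
  then show ?thesis
    using unit_circle_power_m[OF assms] even_i2 by auto
qed

lemma power_m_eq_1_imp_unit_circle: "y ^ m = 1 \<Longrightarrow> y ^ (q + 1) = (1::'a)"
  unfolding q_plus_1_eq power_even_eq by simp

lemma c_neq_0: "c \<noteq> 0"
  using two_neq_0 b_neq_0 by (simp add: c_def)

lemma b_eq: "b = 2 / c"
  using b_neq_0 two_neq_0 by (simp add: c_def)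

lemma two_power_q: "(2::'a) ^ q = 2"
  by (metis frobenius_add one_add_one power_one)

lemma b_power_q: "b ^ q = 2 * c"
proof -
  have "c ^ (q + 1) = 1"
    by (rule power_m_eq_1_imp_unit_circle) (use c_power_m in \<open>simp add: c_def\<close>)
  then have "c ^ q = inverse c"
    by (rule unit_circle_power_q)
  have "b ^ q = (2 / c) ^ q"
    using b_eq by (rule arg_cong)
  also have "\<dots> = 2 ^ q / c ^ q"
    by (rule power_divide)
  also have "\<dots> = 2 * c"
    unfolding two_power_q \<open>c ^ q = inverse c\<close> by (simp add: divide_inverse)
  finally show ?thesis .
qed

lemma
  assumes "u ^ (q + 1) = 1" and "u ^ m = 1"
  shows h_neq_0_of_power_m_eq_1: "h u \<noteq> 0"
    and h_power_q_minus_1_of_power_m_eq_1: "h u ^ (q - 1) = c\<^sup>2 / (u ^ i2)\<^sup>2"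
proof -
  have u: "u \<noteq> 0" "u ^ i2 \<noteq> 0"
    using unit_circle_neq_0[OF assms(1)] by auto
  have hu: "h u = b * u ^ i2"
    using assms(2) by (simp add: h_def)
  then show "h u \<noteq> 0"
    using b_neq_0 u by simp
  have "b ^ (q - 1) = c\<^sup>2"
    by (rule power_q_minus_1_eq) (use b_neq_0 in \<open>simp_all add: b_power_q c_def power2_eq_square\<close>)
  moreover have "(u ^ i2) ^ (q - 1) = inverse ((u ^ i2)\<^sup>2)"
    by (rule power_q_minus_1_eq)
       (use u unit_circle_power_q power_m_eq_1_imp_unit_circle unit_circle_power_i2_m[OF assms(1)]
        in \<open>simp_all add: field_simps power2_eq_square\<close>)
  ultimately show "h u ^ (q - 1) = c\<^sup>2 / (u ^ i2)\<^sup>2"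
    by (simp add: hu power_mult_distrib field_simps)
qed

lemma
  assumes "u ^ (q + 1) = 1" and "u ^ m = -1"
  shows h_neq_0_of_power_m_eq_minus_1: "h u \<noteq> 0"
    and h_power_q_minus_1_of_power_m_eq_minus_1: "h u ^ (q - 1) = c / u ^ i2"
proof -
  define w where "w = u ^ i2"
  have w: "w \<noteq> 0" "w ^ m = 1"
    using unit_circle_neq_0[OF assms(1)] unit_circle_power_i2_m[OF assms(1)] by (auto simp: w_def)
  have hu: "h u = 2 + b * w"
    using assms(2) by (simp add: h_def w_def)
  show "h u \<noteq> 0"
  proof
    assume "h u = 0"
    with hu have "b * w = - 2"
      by (simp add: add_eq_0_iff)
    then have "w = - c"
      using b_neq_0 by (simp add: c_def field_simps)
    then have "w ^ m = - 1"
      using odd_m c_power_m by (simp add: c_def)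
    then show False
      using w(2) two_neq_0 by (metis one_add_one neg_eq_iff_add_eq_0)
  qed
  moreover have "h u ^ q = c / w * h u"
  proof -
    have "w ^ q = inverse w"
      using unit_circle_power_q power_m_eq_1_imp_unit_circle w(2) by simp
    have "h u ^ q = 2 ^ q + b ^ q * w ^ q"
      unfolding hu by (simp only: frobenius_add power_mult_distrib)
    also have "\<dots> = 2 + 2 * c * inverse w"
      by (simp add: two_power_q b_power_q \<open>w ^ q = inverse w\<close>)
    also have "\<dots> = c / w * h u"
      using w(1) b_neq_0 by (simp add: hu c_def field_simps)
    finally show ?thesis .
  qed
  ultimately have "h u ^ (q - 1) = c / w"
    by (rule power_q_minus_1_eq)
  then show "h u ^ (q - 1) = c / u ^ i2"
    by (simp add: w_def)
qed

lemma h_neq_0_on_unit_circle: "u ^ (q + 1) = 1 \<Longrightarrow> h u \<noteq> 0"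
  using unit_circle_power_m h_neq_0_of_power_m_eq_1 h_neq_0_of_power_m_eq_minus_1 by blast

lemma circle_map_of_power_m_eq_1:
  assumes "u ^ (q + 1) = 1" and "u ^ m = 1"
  shows "circle_map u = c\<^sup>2 * (u ^ r / u ^ (2 * i2))"
  unfolding circle_map_def h_power_q_minus_1_of_power_m_eq_1[OF assms] by (simp add: power_even_eq)

lemma circle_map_of_power_m_eq_minus_1:
  assumes "u ^ (q + 1) = 1" and "u ^ m = -1"
  shows "circle_map u = c * (u ^ r / u ^ i2)"
  unfolding circle_map_def h_power_q_minus_1_of_power_m_eq_minus_1[OF assms] by simp

lemma circle_map_power_m:
  assumes "u ^ (q + 1) = 1"
  shows "circle_map u ^ m = u ^ m"
proof -
  have w: "(u ^ i2) ^ m = 1" and w2: "(u ^ (2 * i2)) ^ m = 1" and "c ^ m = 1"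
    using unit_circle_power_i2_m[OF assms] c_power_m
    by (simp_all add: c_def power_even_eq power_swap[of "u ^ i2" 2 m])
  from unit_circle_power_m[OF assms] show ?thesis
  proof
    assume um: "u ^ m = 1"
    have "circle_map u ^ m = (c ^ m)\<^sup>2 * ((u ^ m) ^ r / (u ^ (2 * i2)) ^ m)"
      by (simp add: circle_map_of_power_m_eq_1[OF assms um] power_mult_distrib power_divide
          power_swap[of u r m] power_swap[of c 2 m])
    then show ?thesis
      using um w2 \<open>c ^ m = 1\<close> by simp
  next
    assume um: "u ^ m = -1"
    have "circle_map u ^ m = c ^ m * ((u ^ m) ^ r / (u ^ i2) ^ m)"
      by (simp add: circle_map_of_power_m_eq_minus_1[OF assms um] power_mult_distrib power_divide
          power_swap[of u r m])
    then show ?thesis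
      using um w \<open>c ^ m = 1\<close> odd_r by simp
  qed
qed

lemma square_q_minus_1_eq: "q ^ 2 - 1 = (q - 1) * (q + 1)"
  using q_pos by (cases q) (simp_all add: power2_eq_square)

lemma poly_trinomial:
  "poly (monom 1 r * (1 - monom 1 ((q ^ 2 - 1) div 2) + monom b (i2 * (q - 1))))
    = (\<lambda>x. x ^ r * h (x ^ (q - 1)))"
proof -
  have "q ^ 2 - 1 = 2 * ((q - 1) * m)"
    unfolding square_q_minus_1_eq q_plus_1_eq by (rule mult.left_commute)
  then have "(q ^ 2 - 1) div 2 = (q - 1) * m"
    by simp
  moreover have "x ^ (i2 * (q - 1)) = (x ^ (q - 1)) ^ i2" for x :: 'a
    by (simp only: power_mult mult.commute[of i2])
  ultimately show ?thesis
    by (simp add: fun_eq_iff poly_monom h_def power_mult)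
qed

lemma inj_on_circle_map: "inj_on circle_map {u. u ^ (q + 1) = 1}"
proof (rule inj_onI)
  fix u v :: 'a
  assume "u \<in> {u. u ^ (q + 1) = 1}" "v \<in> {u. u ^ (q + 1) = 1}"
  then have u: "u ^ (q + 1) = 1" and v: "v ^ (q + 1) = 1"
    by simp_all
  have nonzero: "u \<noteq> 0" "v \<noteq> 0"
    using unit_circle_neq_0 u v by blast+
  assume eq: "circle_map u = circle_map v"
  have "u ^ m = v ^ m"
    using circle_map_power_m[OF u] circle_map_power_m[OF v] eq by simp
  then have ratio: "(u / v) ^ m = 1"
    using nonzero by (simp add: power_divide)
  from unit_circle_power_m[OF u] show "u = v"
  proof
    assume um: "u ^ m = 1"
    with \<open>u ^ m = v ^ m\<close> have vm: "v ^ m = 1" by simp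
    have "c\<^sup>2 * (u ^ r / u ^ (2 * i2)) = c\<^sup>2 * (v ^ r / v ^ (2 * i2))"
      using eq by (simp only: circle_map_of_power_m_eq_1[OF u um] circle_map_of_power_m_eq_1[OF v vm])
    then have "u ^ r / u ^ (2 * i2) = v ^ r / v ^ (2 * i2)"
      using c_neq_0 by (metis mult_cancel_left power_not_zero)
    then show "u = v"
      by (rule eq_of_power_div_power_eq_coprime[OF nonzero ratio]) (use coprime_r_2i2 in simp)
  next
    assume um: "u ^ m = -1"
    with \<open>u ^ m = v ^ m\<close> have vm: "v ^ m = -1" by simp
    have "c * (u ^ r / u ^ i2) = c * (v ^ r / v ^ i2)"
      using eq
      by (simp only: circle_map_of_power_m_eq_minus_1[OF u um] circle_map_of_power_m_eq_minus_1[OF v vm])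
    then have "u ^ r / u ^ i2 = v ^ r / v ^ i2"
      using c_neq_0 by (metis mult_cancel_left)
    then show "u = v"
      by (rule eq_of_power_div_power_eq_coprime[OF nonzero ratio]) (use coprime_r_i2 in simp)
  qed
qed

end

lemma unit_circle_trinomialI:
  fixes q i2 r :: nat and b :: "'a::{field,finite}"
  assumes "prime_power q" and "card (UNIV :: 'a set) = q ^ 2" and "q mod 4 = 1"
    and "even i2" and "gcd r (q - 1) = 1"
    and "gcd (int r - int i2) (int ((q + 1) div 2)) = 1"
    and "gcd (int r - 2 * int i2) (int ((q + 1) div 2)) = 1"
    and "b \<noteq> 0" and "(2 / b) ^ ((q + 1) div 2) = 1"
  shows "unit_circle_trinomial q ((q + 1) div 2) i2 r b"
proof unfold_locales
  obtain p k where p: "prime p" and q: "q = p ^ k"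
    using assms(1) unfolding prime_power_def by auto
  show "(x + y) ^ q = x ^ q + y ^ q" for x y :: 'a
    unfolding q by (rule frobenius_add_finite_field[OF p, where n = "k * 2"])
      (use assms(2) q in \<open>simp add: power_mult\<close>)
  have "odd q"
    using assms(3) by presburger
  then show "(2::'a) \<noteq> 0"
    using assms(2) by (intro two_neq_0_of_odd_card) simp
  show "q + 1 = 2 * ((q + 1) div 2)" and "odd ((q + 1) div 2)"
    using assms(3) by presburger+
  show "odd r"
  proof
    assume "even r"
    moreover have "even (q - 1)"
      using \<open>odd q\<close> by simp
    ultimately have "2 dvd gcd r (q - 1)"
      by (rule gcd_greatest)
    then show False
      unfolding assms(5) by simp
  qed
qed (fact assms)+

theorem mainTheorem18:
  fixes q i2 r :: nat and b :: "'a::{field,finite}"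
  assumes "prime_power q" and "card (UNIV :: 'a set) = q ^ 2" and "q mod 4 = 1"
    and "even i2" and "0 < i2" and "2 * i2 < q + 1"
    and "0 < r"
    and "gcd r (q - 1) = 1"
    and "gcd (int r - int i2) (int ((q + 1) div 2)) = 1"
    and "gcd (int r - 2 * int i2) (int ((q + 1) div 2)) = 1"
    and "b \<noteq> 0" and "(2 / b) ^ ((q + 1) div 2) = 1"
  shows "permutation_polynomial
           (monom 1 r * (1 - monom 1 ((q ^ 2 - 1) div 2) + monom b (i2 * (q - 1))))"
proof -
  interpret unit_circle_trinomial q "(q + 1) div 2" i2 r b
    using unit_circle_trinomialI[OF assms(1-4,8-12)] .
  have "bij (\<lambda>x. x ^ r * h (x ^ (q - 1)))"
  proof (rule bij_power_mult_comp_power)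
    show "card (UNIV :: 'a set) - 1 = (q - 1) * (q + 1)"
      using assms(2) square_q_minus_1_eq by simp
    show "coprime r (q - 1)"
      unfolding coprime_iff_gcd_eq_1 by (rule assms(8))
    show "inj_on (\<lambda>u. u ^ r * h u ^ (q - 1)) {u. u ^ (q + 1) = 1}"
      using inj_on_circle_map unfolding circle_map_def[abs_def] .
  qed (use assms(7) h_neq_0_on_unit_circle in auto)
  then show ?thesis
    unfolding permutation_polynomial_def poly_trinomial .
qed

end
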